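(* Let $Z$ be a densely defined closed linear operator in a complex separable Hilbert space $\mathcal{H}$ such that $\operatorname{Dom}(Z)\subset\operatorname{Dom}(Z^* )$, and let $\lambda$ be a boundary eigenvalue of $Z$. Then $$\ker(\lambda-Z)\subset\ker(\overline{\lambda}-Z^* ),$$ i.e. if $f\in\operatorname{Dom}(Z)$ and $Zf=\lambda f$, then $Z^*f=\overline{\lambda}f$. If moreover $\operatorname{Dom}(Z)=\operatorname{Dom}(Z^* )$, then $\ker(\lambda-Z)=\ker(\overline{\lambda}-Z^* )$, i.e. $\lambda$ is a normal eigenvalue of $Z$.
   Context: The numerical range of an operator $Z$ in a Hilbert space $(\mathcal{H},\langle\cdot,\cdot\rangle)$ is $\operatorname{Num}(Z)=\{\langle Zf,f\rangle: f\in\operatorname{Dom}(Z),\ \|f\|=1\}$; it is a convex subset of $\mathbb{C}$. A boundary eigenvalue of $Z$ is an eigenvalue of $Z$ that lies in the topological boundary $\partial(\operatorname{Num}(Z))$ of the numerical range. An eigenvalue $\lambda$ of $Z$ is called normal if $\ker(\lambda-Z)=\ker(\overline{\lambda}-Z^* )$. *)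

theory Defs
  imports "HOL-Analysis.Analysis"
begin

text \<open>The inner product is linear in the first argument and conjugate linear
in the second, matching the numerical range convention (Z f, f).\<close>

class complex_inner_space = ab_group_add +
  fixes cscale :: "complex \<Rightarrow> 'a \<Rightarrow> 'a"
    and cinner :: "'a \<Rightarrow> 'a \<Rightarrow> complex"
  assumes cscale_add_right: "cscale a (x + y) = cscale a x + cscale a y"
    and cscale_add_left: "cscale (a + b) x = cscale a x + cscale b x"
    and cscale_cscale: "cscale a (cscale b x) = cscale (a * b) x"
    and cscale_one: "cscale 1 x = x"
    and cinner_add_left: "cinner (x + y) z = cinner x z + cinner y z"
    and cinner_cscale_left: "cinner (cscale a x) y = a * cinner x y"
    and cinner_commute: "cinner y x = cnj (cinner x y)"
    and cinner_nonneg: "0 \<le> Re (cinner x x)"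
    and cinner_eq_zero_iff: "cinner x x = 0 \<longleftrightarrow> x = 0"

definition cnorm :: "'a::complex_inner_space \<Rightarrow> real" where
  "cnorm x = sqrt (Re (cinner x x))"

class separable_chilbert = complex_inner_space +
  assumes chilbert_complete:
    "\<And>X :: nat \<Rightarrow> 'a. (\<forall>e>0. \<exists>N. \<forall>m\<ge>N. \<forall>n\<ge>N. sqrt (Re (cinner (X m - X n) (X m - X n))) < e)
       \<Longrightarrow> (\<exists>L. \<forall>e>0. \<exists>N. \<forall>n\<ge>N. sqrt (Re (cinner (X n - L) (X n - L))) < e)"
    and chilbert_separable:
    "\<exists>S. countable S \<and> (\<forall>x. \<forall>e>0. \<exists>s\<in>S. sqrt (Re (cinner (x - s) (x - s))) < e)"

definition cconverges :: "(nat \<Rightarrow> 'a::complex_inner_space) \<Rightarrow> 'a \<Rightarrow> bool" where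
  "cconverges X L \<longleftrightarrow> (\<lambda>n. cnorm (X n - L)) \<longlonglongrightarrow> 0"

definition linear_operator :: "'a::complex_inner_space set \<Rightarrow> ('a \<Rightarrow> 'a) \<Rightarrow> bool" where
  "linear_operator D Z \<longleftrightarrow>
     0 \<in> D \<and> (\<forall>x\<in>D. \<forall>y\<in>D. x + y \<in> D) \<and> (\<forall>a. \<forall>x\<in>D. cscale a x \<in> D) \<and>
     (\<forall>x\<in>D. \<forall>y\<in>D. Z (x + y) = Z x + Z y) \<and> (\<forall>a. \<forall>x\<in>D. Z (cscale a x) = cscale a (Z x))"

definition densely_defined :: "'a::complex_inner_space set \<Rightarrow> ('a \<Rightarrow> 'a) \<Rightarrow> bool" where
  "densely_defined D Z \<longleftrightarrow>
     linear_operator D Z \<and> (\<forall>x. \<forall>e>0. \<exists>d\<in>D. cnorm (x - d) < e)"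

definition closed_operator :: "'a::complex_inner_space set \<Rightarrow> ('a \<Rightarrow> 'a) \<Rightarrow> bool" where
  "closed_operator D Z \<longleftrightarrow>
     (\<forall>X x y. (\<forall>n. X n \<in> D) \<and> cconverges X x \<and> cconverges (\<lambda>n. Z (X n)) y
        \<longrightarrow> x \<in> D \<and> Z x = y)"

definition adj_dom :: "'a::complex_inner_space set \<Rightarrow> ('a \<Rightarrow> 'a) \<Rightarrow> 'a set" where
  "adj_dom D Z = {g. \<exists>h. \<forall>f\<in>D. cinner (Z f) g = cinner f h}"

definition adj :: "'a::complex_inner_space set \<Rightarrow> ('a \<Rightarrow> 'a) \<Rightarrow> 'a \<Rightarrow> 'a" where
  "adj D Z g = (THE h. \<forall>f\<in>D. cinner (Z f) g = cinner f h)"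

definition num_range :: "'a::complex_inner_space set \<Rightarrow> ('a \<Rightarrow> 'a) \<Rightarrow> complex set" where
  "num_range D Z = {cinner (Z f) f | f. f \<in> D \<and> cnorm f = 1}"

definition kernel_shift :: "'a::complex_inner_space set \<Rightarrow> ('a \<Rightarrow> 'a) \<Rightarrow> complex \<Rightarrow> 'a set" where
  "kernel_shift D Z lam = {f \<in> D. Z f = cscale lam f}"

definition eigenvalue :: "'a::complex_inner_space set \<Rightarrow> ('a \<Rightarrow> 'a) \<Rightarrow> complex \<Rightarrow> bool" where
  "eigenvalue D Z lam \<longleftrightarrow> (\<exists>f\<in>D. f \<noteq> 0 \<and> Z f = cscale lam f)"

definition boundary_eigenvalue :: "'a::complex_inner_space set \<Rightarrow> ('a \<Rightarrow> 'a) \<Rightarrow> complex \<Rightarrow> bool" where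
  "boundary_eigenvalue D Z lam \<longleftrightarrow> eigenvalue D Z lam \<and> lam \<in> frontier (num_range D Z)"

definition normal_eigenvalue :: "'a::complex_inner_space set \<Rightarrow> ('a \<Rightarrow> 'a) \<Rightarrow> complex \<Rightarrow> bool" where
  "normal_eigenvalue D Z lam \<longleftrightarrow> eigenvalue D Z lam \<and>
     kernel_shift D Z lam = kernel_shift (adj_dom D Z) (adj D Z) (cnj lam)"

end

theory Submission
  imports Defs
begin

text \<open>
  Let \<open>f\<close> be an eigenvector of an operator \<open>S\<close> for the eigenvalue \<open>\<mu>\<close>,
  and suppose some \<open>u\<close> in the domain violates \<open>(S u, f) = \<mu> (u, f)\<close>.  Subtracting
  from \<open>u\<close> its component along \<open>f\<close> gives a vector \<open>v \<perp> f\<close>, and the Rayleigh quotient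
  of \<open>x = f + z v\<close> equals \<open>\<mu> + (z a + |z|\<^sup>2 b) / (|f|\<^sup>2 + |z|\<^sup>2 |v|\<^sup>2)\<close> with \<open>a \<noteq> 0\<close>.
  An intermediate value argument in the variable \<open>s = |z|\<^sup>2\<close> shows that every value
  \<open>\<mu> + w\<close> with \<open>w\<close> small is attained, so \<open>\<mu>\<close> is an interior point of the numerical
  range.  Hence at a boundary eigenvalue \<open>\<lambda>\<close> of \<open>Z\<close> every eigenvector \<open>f\<close> satisfies
  \<open>(Z u, f) = (u, \<lambda>\<^sup>* f)\<close> for all \<open>u\<close>, i.e. \<open>Z\<^sup>* f = \<lambda>\<^sup>* f\<close>.  When \<open>Dom Z = Dom Z\<^sup>*\<close>,
  the adjoint restricted to \<open>Dom Z\<close> is a linear operator whose numerical range is the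
  complex conjugate of that of \<open>Z\<close>, so the same argument applied to \<open>Z\<^sup>*\<close> and
  \<open>\<lambda>\<^sup>*\<close> yields the reverse inclusion.
\<close>

lemma cscale_zero_right [simp]: "cscale a (0::'a::complex_inner_space) = 0"
  using cscale_add_right[of a "0::'a" 0] by simp

lemma cscale_minus_right: "cscale a (- x) = - cscale a (x::'a::complex_inner_space)"
proof -
  have "cscale a x + cscale a (- x) = 0" using cscale_add_right[of a x "- x"] by simp
  then show ?thesis by (metis minus_unique)
qed

lemma cscale_diff_right: "cscale a (x - y) = cscale a x - cscale a (y::'a::complex_inner_space)"
  by (simp only: diff_conv_add_uminus cscale_add_right cscale_minus_right)

lemma cinner_zero_left [simp]: "cinner (0::'a::complex_inner_space) y = 0"
  using cinner_add_left[of "0::'a" 0 y] by simp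

lemma cinner_zero_right [simp]: "cinner x (0::'a::complex_inner_space) = 0"
  using cinner_commute[of "0::'a" x] by simp

lemma cinner_minus_left: "cinner (- x) y = - cinner (x::'a::complex_inner_space) y"
proof -
  have "cinner x y + cinner (- x) y = 0" using cinner_add_left[of x "- x" y] by simp
  then show ?thesis by (metis minus_unique)
qed

lemma cinner_diff_left: "cinner (x - y) z = cinner x z - cinner (y::'a::complex_inner_space) z"
  by (simp only: diff_conv_add_uminus cinner_add_left cinner_minus_left)

lemma cinner_add_right: "cinner x (y + z) = cinner x y + cinner (x::'a::complex_inner_space) z"
  by (metis cinner_commute cinner_add_left complex_cnj_add)

lemma cinner_cscale_right: "cinner x (cscale a y) = cnj a * cinner (x::'a::complex_inner_space) y"
  by (metis cinner_commute cinner_cscale_left complex_cnj_mult complex_cnj_cnj)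

lemma cinner_diff_right: "cinner x (y - z) = cinner x y - cinner (x::'a::complex_inner_space) z"
  by (metis cinner_commute cinner_diff_left complex_cnj_diff complex_cnj_cnj)

lemma cinner_self_real: "cinner x x = complex_of_real (Re (cinner (x::'a::complex_inner_space) x))"
proof -
  have "Im (cinner x x) = 0" using cinner_commute[of x x] by (metis Reals_cnj_iff complex_is_Real_iff)
  then show ?thesis by (simp add: complex_eq_iff)
qed

lemma cinner_self_pos:
  fixes x :: "'a::complex_inner_space"
  assumes "x \<noteq> 0"
  shows "Re (cinner x x) > 0"
proof -
  have "Re (cinner x x) \<noteq> 0"
    using assms cinner_eq_zero_iff cinner_self_real[of x] by (metis of_real_0)
  then show ?thesis using cinner_nonneg[of x] by linarith
qed

lemma linear_operatorD:
  assumes "linear_operator D S"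
  shows "x \<in> D \<Longrightarrow> y \<in> D \<Longrightarrow> x + y \<in> D"
    and "x \<in> D \<Longrightarrow> cscale a x \<in> D"
    and "x \<in> D \<Longrightarrow> y \<in> D \<Longrightarrow> S (x + y) = S x + S y"
    and "x \<in> D \<Longrightarrow> S (cscale a x) = cscale a (S x)"
  using assms unfolding linear_operator_def by blast+

lemma rayleigh_quotient_in_num_range:
  fixes D :: "'a::complex_inner_space set"
  assumes lin: "linear_operator D S" and x: "x \<in> D" "x \<noteq> 0"
    and eq: "cinner (S x) x = k * cinner x x"
  shows "k \<in> num_range D S"
proof -
  define r where "r = Re (cinner x x)"
  have r_pos: "r > 0" unfolding r_def using cinner_self_pos x(2) by blast
  have xx: "cinner x x = complex_of_real r" unfolding r_def by (rule cinner_self_real)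
  define c where "c = complex_of_real (1 / sqrt r)"
  have cc: "c * cnj c * complex_of_real r = 1"
    using r_pos by (simp add: c_def flip: of_real_mult)
  define y where "y = cscale c x"
  have "cinner y y = c * cnj c * cinner x x"
    unfolding y_def by (simp add: cinner_cscale_left cinner_cscale_right mult.assoc)
  then have norm_y: "cnorm y = 1" unfolding cnorm_def using cc xx by simp
  have "cinner (S y) y = c * cnj c * cinner (S x) x"
    unfolding y_def using lin x(1)
    by (simp add: linear_operatorD cinner_cscale_left cinner_cscale_right mult.assoc)
  also have "\<dots> = k * (c * cnj c * complex_of_real r)" using eq xx by (simp add: ac_simps)
  finally have "cinner (S y) y = k" using cc by simp
  moreover have "y \<in> D" unfolding y_def using lin x(1) by (rule linear_operatorD)
  ultimately show ?thesis using norm_y unfolding num_range_def by blast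
qed

section \<open>A scalar equation solved by the intermediate value theorem\<close>

text \<open>Writing \<open>s = |z|\<^sup>2\<close>, the candidate
  is \<open>z = R s / a\<close> with \<open>R s = w (m + s n) - s b\<close>, and one needs \<open>|R s|\<^sup>2 = s |a|\<^sup>2\<close>;
  the difference of the two sides changes sign on \<open>[0, s\<^sub>1]\<close>.\<close>

lemma radial_equation_solvable:
  fixes a b w :: complex and m n :: real
  assumes a: "a \<noteq> 0" and m: "m > 0" and n: "n \<ge> 0"
    and w1: "cmod w \<le> 1" and small: "cmod w * (9 * m * (n + cmod b + 1)) \<le> (cmod a)\<^sup>2"
  shows "\<exists>z. z * a + complex_of_real ((cmod z)\<^sup>2) * b = w * complex_of_real (m + (cmod z)\<^sup>2 * n)"
proof -
  define R where "R = (\<lambda>s::real. w * complex_of_real (m + s * n) - complex_of_real s * b)"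
  define F where "F = (\<lambda>s. (cmod (R s))\<^sup>2 - s * (cmod a)\<^sup>2)"
  define s1 where "s1 = (3 * m * cmod w / cmod a)\<^sup>2"
  have ca: "cmod a > 0" using a by simp
  have s1_pos: "s1 \<ge> 0" unfolding s1_def by simp
  have "s1 * (n + cmod b + 1) = m * cmod w * (cmod w * (9 * m * (n + cmod b + 1)) / (cmod a)\<^sup>2)"
    unfolding s1_def by (simp add: power2_eq_square field_simps)
  also have "\<dots> \<le> m * cmod w"
    using small ca m by (intro mult_left_le) (auto simp: divide_le_eq_1)
  finally have s1_bound: "s1 * (n + cmod b + 1) \<le> m * cmod w" .
  have sn: "s1 * n \<le> m" and sb: "s1 * cmod b \<le> m * cmod w"
    using s1_bound s1_pos n m w1 mult_left_le[OF w1, of m]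
    by (smt (verit, best) distrib_left mult_nonneg_nonneg norm_ge_zero)+
  have "cmod (R s1) \<le> cmod (w * complex_of_real (m + s1 * n)) + cmod (complex_of_real s1 * b)"
    unfolding R_def by (rule norm_triangle_ineq4)
  also have "\<dots> = cmod w * (m + s1 * n) + s1 * cmod b"
    using m n s1_pos by (simp only: norm_mult norm_of_real abs_of_nonneg add_nonneg_nonneg
        mult_nonneg_nonneg less_imp_le)
  also have "\<dots> \<le> 3 * m * cmod w"
    using sn sb mult_left_mono[OF sn, of "cmod w"] by (simp add: algebra_simps)
  finally have "(cmod (R s1))\<^sup>2 \<le> (3 * m * cmod w)\<^sup>2" by (intro power_mono) auto
  also have "\<dots> = s1 * (cmod a)\<^sup>2" unfolding s1_def using ca by (simp add: power_divide)
  finally have "F s1 \<le> 0" unfolding F_def by simp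
  moreover have "F 0 \<ge> 0" and "continuous_on {0..s1} F"
    unfolding F_def R_def by (auto intro!: continuous_intros)
  ultimately obtain s where s: "0 \<le> s" "s \<le> s1" "F s = 0"
    using IVT2'[of F s1 0 0] s1_pos by auto
  define z where "z = R s / a"
  have "(cmod z)\<^sup>2 = s"
    using s(3) ca unfolding z_def F_def by (simp add: norm_divide power_divide field_simps)
  moreover have "z * a = R s" unfolding z_def using a by simp
  ultimately show ?thesis unfolding R_def by (intro exI[of _ z]) (simp add: algebra_simps)
qed

lemma radial_equation_locally_solvable:
  fixes a b :: complex and m n :: real
  assumes a: "a \<noteq> 0" and m: "m > 0" and n: "n \<ge> 0"
  shows "\<exists>e>0. \<forall>w. cmod w < e \<longrightarrow>
     (\<exists>z. z * a + complex_of_real ((cmod z)\<^sup>2) * b = w * complex_of_real (m + (cmod z)\<^sup>2 * n))"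
proof -
  define K where "K = 9 * m * (n + cmod b + 1)"
  have K: "K > 0" unfolding K_def using m n by (simp add: add_nonneg_pos)
  have "\<exists>z. z * a + complex_of_real ((cmod z)\<^sup>2) * b = w * complex_of_real (m + (cmod z)\<^sup>2 * n)"
    if "cmod w < min 1 ((cmod a)\<^sup>2 / K)" for w
  proof -
    have "cmod w \<le> 1" and "cmod w * K \<le> (cmod a)\<^sup>2"
      using that K by (auto simp: pos_less_divide_eq)
    then show ?thesis using radial_equation_solvable[OF a m n] unfolding K_def by blast
  qed
  moreover have "min 1 ((cmod a)\<^sup>2 / K) > 0" using K a by simp
  ultimately show ?thesis by blast
qed

section \<open>Eigenvalues in the interior of the numerical range\<close>

lemma eigenvector_perturbation:
  fixes D :: "'a::complex_inner_space set" and z :: complex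
  assumes lin: "linear_operator D S" and f: "f \<in> D" "S f = cscale \<mu> f"
    and v: "v \<in> D" "cinner v f = 0"
  defines "x \<equiv> f + cscale z v" and "t \<equiv> S v - cscale \<mu> v"
  shows "cinner (S x) x = \<mu> * cinner x x + z * cinner t f + complex_of_real ((cmod z)\<^sup>2) * cinner t v"
    and "cinner x x = cinner f f + complex_of_real ((cmod z)\<^sup>2) * cinner v v"
proof -
  have zz: "z * cnj z = complex_of_real ((cmod z)\<^sup>2)" by (rule complex_norm_square[symmetric])
  have fv: "cinner f v = 0" using v(2) cinner_commute[of f v] by simp
  have "S x = cscale \<mu> f + cscale z (S v)"
    unfolding x_def using lin f v(1) by (simp add: linear_operatorD)
  then have "S x - cscale \<mu> x = cscale z t"
    unfolding x_def t_def
    by (simp add: cscale_add_right cscale_diff_right cscale_cscale mult.commute)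
  then have "cinner (S x) x - \<mu> * cinner x x = cinner (cscale z t) x"
    by (metis cinner_cscale_left cinner_diff_left)
  also have "\<dots> = z * cinner t f + (z * cnj z) * cinner t v"
    unfolding x_def by (simp add: cinner_cscale_left cinner_add_right cinner_cscale_right algebra_simps)
  finally show "cinner (S x) x = \<mu> * cinner x x + z * cinner t f + complex_of_real ((cmod z)\<^sup>2) * cinner t v"
    unfolding zz by (simp add: algebra_simps)
  have "cinner x x = cinner f f + cnj z * cinner f v + z * (cinner v f + cnj z * cinner v v)"
    unfolding x_def
    by (simp add: cinner_add_left cinner_add_right cinner_cscale_left cinner_cscale_right algebra_simps)
  then show "cinner x x = cinner f f + complex_of_real ((cmod z)\<^sup>2) * cinner v v"
    using fv v(2) zz by (simp add: algebra_simps)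
qed

text \<open>The key lemma: if \<open>f \<noteq> 0\<close> is an eigenvector for \<open>\<mu>\<close> and some \<open>u\<close> violates
  \<open>(S u, f) = \<mu> (u, f)\<close>, then every point near \<open>\<mu>\<close> is a Rayleigh quotient of some
  \<open>f + z v\<close>, where \<open>v\<close> is the component of \<open>u\<close> orthogonal to \<open>f\<close>.\<close>

lemma eigenvalue_in_interior_num_range:
  fixes D :: "'a::complex_inner_space set"
  assumes lin: "linear_operator D S" and f: "f \<in> D" "f \<noteq> 0" "S f = cscale \<mu> f"
    and u: "u \<in> D" and ne: "cinner (S u) f \<noteq> \<mu> * cinner u f"
  shows "\<mu> \<in> interior (num_range D S)"
proof -
  define m where "m = Re (cinner f f)"
  have m_pos: "m > 0" unfolding m_def using cinner_self_pos f(2) by blast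
  have ff: "cinner f f = complex_of_real m" unfolding m_def by (rule cinner_self_real)
  define c where "c = cinner u f / cinner f f"
  define v where "v = u + cscale (- c) f"
  have vD: "v \<in> D" unfolding v_def using lin u f(1) by (simp add: linear_operatorD)
  have vf: "cinner v f = 0" unfolding v_def c_def using ff m_pos by (simp add: cinner_add_left cinner_cscale_left)
  define t where "t = S v - cscale \<mu> v"
  define n where "n = Re (cinner v v)"
  have n_nonneg: "n \<ge> 0" unfolding n_def by (rule cinner_nonneg)
  have vv: "cinner v v = complex_of_real n" unfolding n_def by (rule cinner_self_real)
  have "cinner t f = cinner (S u) f - \<mu> * cinner u f"
  proof -
    have "S v = S u + cscale (- c) (cscale \<mu> f)"
      unfolding v_def using lin u f by (simp add: linear_operatorD)
    then show ?thesis
      unfolding t_def using vf ff m_pos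
      by (simp add: cinner_diff_left cinner_add_left cinner_cscale_left c_def)
  qed
  with ne have a: "cinner t f \<noteq> 0" by simp
  obtain e where e: "e > 0" and solve: "\<And>w. cmod w < e \<Longrightarrow> \<exists>z. z * cinner t f +
      complex_of_real ((cmod z)\<^sup>2) * cinner t v = w * complex_of_real (m + (cmod z)\<^sup>2 * n)"
    using radial_equation_locally_solvable[OF a m_pos n_nonneg] by blast
  have "ball \<mu> e \<subseteq> num_range D S"
  proof
    fix y assume "y \<in> ball \<mu> e"
    then have "cmod (y - \<mu>) < e" by (simp add: dist_norm norm_minus_commute)
    then obtain z where z: "z * cinner t f + complex_of_real ((cmod z)\<^sup>2) * cinner t v
        = (y - \<mu>) * complex_of_real (m + (cmod z)\<^sup>2 * n)"
      using solve by blast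
    define x where "x = f + cscale z v"
    have xx: "cinner x x = complex_of_real (m + (cmod z)\<^sup>2 * n)"
      using eigenvector_perturbation(2)[OF lin f(1,3) vD vf] ff vv unfolding x_def by simp
    have "cinner (S x) x = y * cinner x x"
      using eigenvector_perturbation(1)[OF lin f(1,3) vD vf] z xx
      unfolding x_def t_def by (simp add: algebra_simps)
    moreover have "x \<noteq> 0"
    proof
      assume "x = 0"
      then have "complex_of_real (m + (cmod z)\<^sup>2 * n) = 0" using xx by simp
      then have "m + (cmod z)\<^sup>2 * n = 0" by (simp only: of_real_eq_0_iff)
      then show False using m_pos n_nonneg by (smt (verit) zero_le_mult_iff zero_le_power2)
    qed
    moreover have "x \<in> D" unfolding x_def using lin f(1) vD by (simp add: linear_operatorD)
    ultimately show "y \<in> num_range D S" by (intro rayleigh_quotient_in_num_range[OF lin])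
  qed
  then show ?thesis using e mem_interior by blast
qed

lemma eigenvector_outside_interior:
  fixes D :: "'a::complex_inner_space set"
  assumes lin: "linear_operator D S" and \<mu>: "\<mu> \<notin> interior (num_range D S)"
    and f: "f \<in> D" "S f = cscale \<mu> f" and u: "u \<in> D"
  shows "cinner (S u) f = \<mu> * cinner u f"
proof (cases "f = 0")
  case False
  then show ?thesis using eigenvalue_in_interior_num_range[OF lin f(1) False f(2) u] \<mu> by blast
qed simp

section \<open>The adjoint of a densely defined operator\<close>

text \<open>A vector orthogonal to a dense set vanishes; hence inner products against a dense
  domain determine a vector.  This makes the adjoint well defined.\<close>

lemma densely_defined_inner_unique:
  fixes D :: "'a::complex_inner_space set"
  assumes dd: "densely_defined D Z" and h: "\<forall>u\<in>D. cinner u h1 = cinner u h2"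
  shows "h1 = h2"
proof (rule ccontr)
  define d where "d = h1 - h2"
  assume "h1 \<noteq> h2"
  then have "d \<noteq> 0" unfolding d_def by simp
  then have "cnorm d > 0" unfolding cnorm_def using cinner_self_pos by simp
  then obtain u where u: "u \<in> D" "cnorm (d - u) < cnorm d"
    using dd unfolding densely_defined_def by blast
  have ud: "cinner u d = 0" using h u(1) unfolding d_def by (simp add: cinner_diff_right)
  then have "cinner d u = 0" using cinner_commute[of u d] by simp
  then have "cinner (d - u) (d - u) = cinner d d + cinner u u"
    using ud by (simp add: cinner_diff_left cinner_diff_right)
  then have "Re (cinner d d) \<le> Re (cinner (d - u) (d - u))"
    using cinner_nonneg[of u] by simp
  then have "cnorm d \<le> cnorm (d - u)" unfolding cnorm_def by (rule real_sqrt_le_mono)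
  then show False using u(2) by simp
qed

lemma adj_inner:
  fixes D :: "'a::complex_inner_space set"
  assumes dd: "densely_defined D Z" and g: "g \<in> adj_dom D Z" and u: "u \<in> D"
  shows "cinner (Z u) g = cinner u (adj D Z g)"
proof -
  obtain h where "\<forall>f\<in>D. cinner (Z f) g = cinner f h" using g unfolding adj_dom_def by blast
  then have "\<exists>!h. \<forall>f\<in>D. cinner (Z f) g = cinner f h"
    using densely_defined_inner_unique[OF dd] by (metis (no_types, lifting))
  then have "\<forall>f\<in>D. cinner (Z f) g = cinner f (adj D Z g)"
    unfolding adj_def by (rule theI')
  then show ?thesis using u by blast
qed

lemma adj_eqI:
  fixes D :: "'a::complex_inner_space set"
  assumes dd: "densely_defined D Z" and h: "\<forall>u\<in>D. cinner (Z u) g = cinner u h"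
  shows "g \<in> adj_dom D Z" and "adj D Z g = h"
proof -
  show g: "g \<in> adj_dom D Z" using h unfolding adj_dom_def by blast
  show "adj D Z g = h"
    using adj_inner[OF dd g] h densely_defined_inner_unique[OF dd, of "adj D Z g" h] by simp
qed

lemma adj_linear_operator:
  fixes D :: "'a::complex_inner_space set"
  assumes dd: "densely_defined D Z"
  shows "linear_operator (adj_dom D Z) (adj D Z)"
proof -
  have "x + y \<in> adj_dom D Z \<and> adj D Z (x + y) = adj D Z x + adj D Z y"
    if "x \<in> adj_dom D Z" "y \<in> adj_dom D Z" for x y
    using adj_eqI[OF dd, of "x + y" "adj D Z x + adj D Z y"] adj_inner[OF dd] that
    by (simp add: cinner_add_right)
  moreover have "cscale a x \<in> adj_dom D Z \<and> adj D Z (cscale a x) = cscale a (adj D Z x)"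
    if "x \<in> adj_dom D Z" for a x
    using adj_eqI[OF dd, of "cscale a x" "cscale a (adj D Z x)"] adj_inner[OF dd] that
    by (simp add: cinner_cscale_right)
  moreover have "0 \<in> adj_dom D Z" using adj_eqI(1)[OF dd, of 0 0] by simp
  ultimately show ?thesis unfolding linear_operator_def by blast
qed

text \<open>If \<open>Dom Z \<subseteq> Dom Z\<^sup>*\<close>, the numerical range of \<open>Z\<^sup>*\<close> restricted to \<open>Dom Z\<close> is
  the complex conjugate of the numerical range of \<open>Z\<close>, since \<open>(Z\<^sup>* y, y) = cnj (Z y, y)\<close>.\<close>

lemma num_range_adj:
  fixes D :: "'a::complex_inner_space set"
  assumes dd: "densely_defined D Z" and dom: "D \<subseteq> adj_dom D Z"
  shows "num_range D (adj D Z) = cnj ` num_range D Z"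
proof -
  have "cinner (adj D Z y) y = cnj (cinner (Z y) y)" if "y \<in> D" for y
    using adj_inner[OF dd _ that, of y] dom that cinner_commute[of "adj D Z y" y] by auto
  then show ?thesis unfolding num_range_def by (auto simp: image_iff) metis
qed

section \<open>Boundary eigenvalues\<close>

text \<open>No assumption
  on \<open>Dom Z\<^sup>*\<close> is needed here.\<close>

lemma kernel_subset_adj_kernel:
  fixes D :: "'a::complex_inner_space set"
  assumes dd: "densely_defined D Z" and lam: "lam \<notin> interior (num_range D Z)"
  shows "kernel_shift D Z lam \<subseteq> kernel_shift (adj_dom D Z) (adj D Z) (cnj lam)"
proof
  fix f assume "f \<in> kernel_shift D Z lam"
  then have f: "f \<in> D" "Z f = cscale lam f" unfolding kernel_shift_def by blast+
  have lin: "linear_operator D Z" using dd unfolding densely_defined_def by blast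
  have "\<forall>u\<in>D. cinner (Z u) f = cinner u (cscale (cnj lam) f)"
    using eigenvector_outside_interior[OF lin lam f] by (simp add: cinner_cscale_right)
  then show "f \<in> kernel_shift (adj_dom D Z) (adj D Z) (cnj lam)"
    using adj_eqI[OF dd] unfolding kernel_shift_def by blast
qed

text \<open>If \<open>Dom Z = Dom Z\<^sup>*\<close>, the argument applies to \<open>Z\<^sup>*\<close>, whose numerical range is the
  conjugate one, and gives the reverse inclusion.\<close>

lemma adj_kernel_subset_kernel:
  fixes D :: "'a::complex_inner_space set"
  assumes dd: "densely_defined D Z" and dom: "D = adj_dom D Z"
    and lam: "lam \<notin> interior (num_range D Z)"
  shows "kernel_shift (adj_dom D Z) (adj D Z) (cnj lam) \<subseteq> kernel_shift D Z lam"
proof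
  fix g assume "g \<in> kernel_shift (adj_dom D Z) (adj D Z) (cnj lam)"
  then have g: "g \<in> D" "adj D Z g = cscale (cnj lam) g"
    unfolding kernel_shift_def using dom by blast+
  have lin: "linear_operator D (adj D Z)" using adj_linear_operator[OF dd] dom by simp
  have "interior (num_range D (adj D Z)) = cnj ` interior (num_range D Z)"
    using num_range_adj[OF dd] dom
    by (simp add: interior_injective_linear_image bounded_linear.linear bounded_linear_cnj inj_on_def)
  then have "cnj lam \<notin> interior (num_range D (adj D Z))"
    using lam by (auto simp: image_iff)
  then have eq: "cinner (adj D Z u) g = cnj lam * cinner u g" if "u \<in> D" for u
    using eigenvector_outside_interior[OF lin _ g that] by blast
  have "cinner u (Z g) = cinner u (cscale lam g)" if u: "u \<in> D" for u
  proof -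
    have "cinner u (Z g) = cnj (cinner g (adj D Z u))"
      using adj_inner[OF dd _ g(1), of u] dom u cinner_commute[of u "Z g"] by simp
    also have "\<dots> = cnj lam * cinner u g"
      using eq[OF u] cinner_commute[of "adj D Z u" g] by simp
    finally show ?thesis by (simp add: cinner_cscale_right)
  qed
  then have "Z g = cscale lam g" by (intro densely_defined_inner_unique[OF dd] ballI)
  then show "g \<in> kernel_shift D Z lam" using g(1) unfolding kernel_shift_def by blast
qed

theorem mainTheorem1:
  fixes D :: "'a::separable_chilbert set" and Z :: "'a \<Rightarrow> 'a" and lam :: complex
  assumes "densely_defined D Z"
    and "closed_operator D Z"
    and "D \<subseteq> adj_dom D Z"
    and "boundary_eigenvalue D Z lam"
  shows "kernel_shift D Z lam \<subseteq> kernel_shift (adj_dom D Z) (adj D Z) (cnj lam)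
         \<and> (D = adj_dom D Z \<longrightarrow> normal_eigenvalue D Z lam)"
proof -
  have eig: "eigenvalue D Z lam" and "lam \<in> frontier (num_range D Z)"
    using assms(4) unfolding boundary_eigenvalue_def by blast+
  then have lam: "lam \<notin> interior (num_range D Z)" by (simp add: frontier_def)
  have sub: "kernel_shift D Z lam \<subseteq> kernel_shift (adj_dom D Z) (adj D Z) (cnj lam)"
    using kernel_subset_adj_kernel[OF assms(1) lam] .
  moreover have "normal_eigenvalue D Z lam" if "D = adj_dom D Z"
    using adj_kernel_subset_kernel[OF assms(1) that lam] sub eig
    unfolding normal_eigenvalue_def by blast
  ultimately show ?thesis by blast
qed

end
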